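(* Let $(X,T)$ be a minimal Cantor system which is topologically conjugate via $\varphi:X\to U$ to the induced system $(U,T_U)$, where $U\subsetneq X$ is clopen. Then $\lim_{n\to\infty}\sup_{\mu\in M(X,T)}\mu(\varphi^n(X))=0$. In particular, $\bigcap_{n\in\mathbb N}\varphi^n(X)$ has measure $0$ for every $T$-invariant Borel probability measure.
   Context: A minimal Cantor system is a pair $(X,T)$, $X$ a Cantor set, $T$ a homeomorphism with all orbits dense. For clopen $U$, $T_U(x)=T^{r_U(x)}x$ where $r_U(x)=\inf\{n>0:T^nx\in U\}$. $M(X,T)$ denotes the set of $T$-invariant Borel probability measures on $X$. *)

theory Defs
  imports "HOL-Probability.Probability"
begin

text \<open>A Cantor set: nonempty compact, perfect, totally disconnected subset of a metric space
  (Brouwer's characterisation; metrizability comes from the ambient metric space).\<close>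
definition cantor_set :: "'a::metric_space set \<Rightarrow> bool" where
  "cantor_set X \<longleftrightarrow> X \<noteq> {} \<and> compact X \<and> (\<forall>x\<in>X. x islimpt X)
     \<and> (\<forall>x\<in>X. connected_component_set X x = {x})"

definition minimal_cantor_system :: "'a::metric_space set \<Rightarrow> ('a \<Rightarrow> 'a) \<Rightarrow> bool" where
  "minimal_cantor_system X T \<longleftrightarrow> cantor_set X \<and>
     (\<exists>S. homeomorphism X X T S \<and>
        (\<forall>x\<in>X. X \<subseteq> closure ({(T ^^ n) x | n. True} \<union> {(S ^^ n) x | n. True})))"

definition clopen_in :: "'a::topological_space set \<Rightarrow> 'a set \<Rightarrow> bool" where
  "clopen_in X U \<longleftrightarrow> openin (top_of_set X) U \<and> closedin (top_of_set X) U"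

definition return_time :: "'a set \<Rightarrow> ('a \<Rightarrow> 'a) \<Rightarrow> 'a \<Rightarrow> nat" where
  "return_time U T x = (LEAST n. n > 0 \<and> (T ^^ n) x \<in> U)"

definition induced_map :: "'a set \<Rightarrow> ('a \<Rightarrow> 'a) \<Rightarrow> 'a \<Rightarrow> 'a" where
  "induced_map U T x = (T ^^ return_time U T x) x"

definition invariant_measures :: "'a::topological_space set \<Rightarrow> ('a \<Rightarrow> 'a) \<Rightarrow> 'a measure set" where
  "invariant_measures X T = {M. sets M = sets (restrict_space borel X) \<and> prob_space M \<and>
      T \<in> measurable M M \<and> (\<forall>A\<in>sets M. emeasure M (T -` A \<inter> space M) = emeasure M A)}"

end

theory Submission
  imports Defs
begin

text \<open>
  Let \<open>q < 1\<close> bound \<open>\<mu>(U)\<close> uniformly over all invariant measures \<open>\<mu>\<close>: by minimality and compactness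
  finitely many translates of \<open>X - U\<close> cover \<open>X\<close>. For \<open>\<mu>(U) > 0\<close>, pulling \<open>\<mu>\<close> restricted to \<open>U\<close>
  back along \<open>\<phi>\<close> and normalising gives another invariant measure \<open>\<nu>\<close>, because the induced map
  preserves \<open>\<mu>\<close> on \<open>U\<close> and \<open>\<phi>\<close> conjugates \<open>T\<close> to it; thus \<open>\<mu>(\<phi> A) = \<mu>(U) \<nu>(A) \<le> q \<nu>(A)\<close>, and by
  induction \<open>\<mu>(\<phi>\<^sup>n X) \<le> q\<^sup>n\<close>. The supremum is taken over a nonempty set: a Krylov--Bogolyubov
  argument on the algebra of clopen sets yields an invariant measure.
\<close>

lemma clopen_in_closed_iff:
  assumes "closed X"
  shows "clopen_in X C \<longleftrightarrow> C \<subseteq> X \<and> closed C \<and> closed (X - C)"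
proof -
  have "openin (top_of_set X) C \<longleftrightarrow> C \<subseteq> X \<and> closedin (top_of_set X) (X - C)"
    using openin_closedin_eq[of "top_of_set X" C] by auto
  moreover have "X - (X - C) = C" if "C \<subseteq> X" using that by blast
  ultimately show ?thesis
    unfolding clopen_in_def using assms by (auto simp: closedin_closed_eq)
qed

lemma clopen_in_nbhd:
  fixes X :: "'a::metric_space set"
  assumes "compact X" "\<forall>x\<in>X. connected_component_set X x = {x}" "x \<in> X" "open G" "x \<in> G"
  obtains C where "clopen_in X C" "x \<in> C" "C \<subseteq> G"
proof -
  have "connected_component_of_set (top_of_set X) x = {x}"
    using assms(2,3) unfolding connected_component_of_def connected_component_def
    by (auto simp: connectedin_subtopology)
  then have component: "{x} \<in> connected_components_of (top_of_set X)"
    unfolding connected_components_of_def using assms(3) by force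
  have "locally_compact_space (top_of_set X)"
    using assms(1) by (intro compact_imp_locally_compact_space compact_space_subtopology) simp
  moreover have "Hausdorff_space (top_of_set X)"
    by (rule Hausdorff_space_subtopology) (rule Hausdorff_space_euclidean)
  moreover have "compactin (top_of_set X) {x}"
    using assms(3) by (simp add: compactin_subtopology)
  moreover have "openin (top_of_set X) (G \<inter> X)"
    using assms(4) by (auto simp: openin_open)
  ultimately obtain C V where C: "openin (top_of_set X) C" "openin (top_of_set X) V"
      "disjnt C V" "C \<union> V = X" "{x} \<subseteq> C" "C \<subseteq> G \<inter> X"
    by (rule wilder_locally_compact_component_thm[OF _ _ component]) (use assms(3,5) in auto)
  then have "C = X - V"
    by (auto simp: disjnt_def)
  with C(2) have "closedin (top_of_set X) C"
    by auto
  with C show thesis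
    using that unfolding clopen_in_def by blast
qed

lemma clopen_in_Union:
  assumes "finite \<C>" "\<And>C. C \<in> \<C> \<Longrightarrow> clopen_in X C"
  shows "clopen_in X (\<Union>\<C>)"
  using assms unfolding clopen_in_def by (auto intro: openin_Union closedin_Union)

lemma compact_subset_clopen_in:
  fixes X :: "'a::metric_space set"
  assumes X: "compact X" "\<forall>x\<in>X. connected_component_set X x = {x}"
    and K: "compact K" "K \<subseteq> X" and G: "open G" "K \<subseteq> G"
  obtains C where "clopen_in X C" "K \<subseteq> C" "C \<subseteq> G"
proof -
  have "\<exists>C. clopen_in X C \<and> x \<in> C \<and> C \<subseteq> G" if "x \<in> K" for x
    by (rule clopen_in_nbhd[OF X, of x G]) (use that K G in auto)
  then obtain C where C: "\<And>x. x \<in> K \<Longrightarrow> clopen_in X (C x) \<and> x \<in> C x \<and> C x \<subseteq> G"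
    by metis
  have "\<exists>V. open V \<and> C x = X \<inter> V" if "x \<in> K" for x
    using C[OF that] unfolding clopen_in_def openin_open by blast
  then obtain V where V: "\<And>x. x \<in> K \<Longrightarrow> open (V x) \<and> C x = X \<inter> V x"
    by metis
  obtain J where J: "J \<subseteq> K" "finite J" "K \<subseteq> (\<Union>x\<in>J. V x)"
  proof (rule compactE_image[OF K(1), of K V])
    show "K \<subseteq> (\<Union>x\<in>K. V x)"
      using C V by blast
  qed (use V in auto)
  show thesis
  proof
    show "clopen_in X (\<Union>x\<in>J. C x)"
      using J C by (intro clopen_in_Union) auto
    show "K \<subseteq> (\<Union>x\<in>J. C x)"
      using J V K(2) by blast
    show "(\<Union>x\<in>J. C x) \<subseteq> G"
      using J C by blast
  qed
qed

lemma open_Int_compact_eq_UN_compact: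
  fixes X :: "'a::metric_space set"
  assumes "compact X" "open G"
  obtains K :: "nat \<Rightarrow> 'a set" where "\<And>m. compact (K m)" "\<And>m. K m \<subseteq> G \<inter> X" "G \<inter> X = (\<Union>m. K m)"
proof (cases "X \<subseteq> G")
  case True
  with \<open>compact X\<close> show thesis
    by (intro that[of "\<lambda>_. X"]) auto
next
  case False
  have closed_XG: "closed (X - G)"
    using assms by (simp add: compact_imp_closed closed_Diff)
  define K where "K m = X \<inter> {x. inverse (real (Suc m)) \<le> infdist x (X - G)}" for m
  have "compact (K m)" for m
  proof -
    have "closed {x. inverse (real (Suc m)) \<le> infdist x (X - G)}"
      by (intro closed_Collect_le continuous_on_const continuous_on_infdist continuous_on_id)
    then show ?thesis
      unfolding K_def using \<open>compact X\<close> by (simp add: compact_Int_closed)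
  qed
  moreover have "K m \<subseteq> G \<inter> X" for m
  proof
    fix x assume "x \<in> K m"
    then have "x \<in> X" "0 < infdist x (X - G)"
      unfolding K_def by (auto intro: less_le_trans[of 0 "inverse (real (Suc m))"])
    then show "x \<in> G \<inter> X"
      using infdist_zero[of x "X - G"] by (cases "x \<in> G") auto
  qed
  moreover have "G \<inter> X \<subseteq> (\<Union>m. K m)"
  proof
    fix x assume x: "x \<in> G \<inter> X"
    have "infdist x (X - G) \<noteq> 0"
      using in_closed_iff_infdist_zero[OF closed_XG] False x by auto
    then have "0 < infdist x (X - G)"
      using infdist_nonneg[of x "X - G"] by linarith
    then obtain m where "inverse (real (Suc m)) < infdist x (X - G)"
      using reals_Archimedean by blast
    then have "x \<in> K m"
      using x unfolding K_def by simp
    then show "x \<in> (\<Union>m. K m)"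
      by blast
  qed
  ultimately show thesis
    using that by blast
qed

lemma open_Int_eq_UN_clopen_in:
  fixes X :: "'a::metric_space set"
  assumes X: "compact X" "\<forall>x\<in>X. connected_component_set X x = {x}" and "open G"
  obtains D :: "nat \<Rightarrow> 'a set" where "\<And>m. clopen_in X (D m)" "G \<inter> X = (\<Union>m. D m)"
proof -
  obtain K :: "nat \<Rightarrow> 'a set" where K: "\<And>m. compact (K m)" "\<And>m. K m \<subseteq> G \<inter> X" and "G \<inter> X = (\<Union>m. K m)"
    using open_Int_compact_eq_UN_compact[OF X(1) \<open>open G\<close>] by blast
  have "\<exists>D. clopen_in X D \<and> K m \<subseteq> D \<and> D \<subseteq> G" for m
  proof -
    obtain D where "clopen_in X D" "K m \<subseteq> D" "D \<subseteq> G"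
      by (rule compact_subset_clopen_in[OF X K(1) _ \<open>open G\<close>]) (use K(2) in auto)
    then show ?thesis
      by blast
  qed
  then obtain D where D: "\<And>m. clopen_in X (D m)" "\<And>m. K m \<subseteq> D m" "\<And>m. D m \<subseteq> G"
    by metis
  have "D m \<subseteq> G \<inter> X" for m
    using D(1,3)[of m] unfolding clopen_in_def by (auto dest: openin_imp_subset)
  then have "(\<Union>m. D m) \<subseteq> G \<inter> X"
    by (rule UN_least)
  moreover have "(\<Union>m. K m) \<subseteq> (\<Union>m. D m)"
    using D(2) by (rule UN_mono[OF subset_refl])
  ultimately have "G \<inter> X = (\<Union>m. D m)"
    using \<open>G \<inter> X = (\<Union>m. K m)\<close> by (intro subset_antisym) simp_all
  with D(1) show thesis
    using that by blast
qed

lemma algebra_clopen_in: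
  "algebra X {C. clopen_in X C}"
  unfolding algebra_iff_Un clopen_in_def
  by (auto intro: openin_Un closedin_Un openin_diff closedin_diff dest: openin_imp_subset)

lemma Int_stable_clopen_in: "Int_stable {C. clopen_in X C}"
  unfolding Int_stable_def clopen_in_def by (auto intro: openin_Int closedin_Int)

lemma clopen_in_continuous_preimage:
  assumes "continuous_on S f" "f \<in> S \<rightarrow> T" "clopen_in T U"
  shows "clopen_in S (S \<inter> f -` U)"
  using assms unfolding clopen_in_def
  by (auto intro: continuous_openin_preimage continuous_closedin_preimage_gen)

lemma clopen_in_sets_restrict_borel:
  assumes "closed X" "clopen_in X U"
  shows "U \<in> sets (restrict_space borel X)"
  using assms by (simp add: clopen_in_closed_iff sets_restrict_space_iff)

lemma sets_restrict_borel_eq_sigma_clopen_in: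
  fixes X :: "'a::metric_space set"
  assumes X: "compact X" "\<forall>x\<in>X. connected_component_set X x = {x}"
  shows "sets (restrict_space borel X) = sigma_sets X {C. clopen_in X C}"
proof
  have "closed X"
    using X(1) by (rule compact_imp_closed)
  then have X_borel: "X \<inter> space borel \<in> sets borel"
    by simp
  interpret sigma_algebra X "sets (restrict_space borel X)"
    using sets.sigma_algebra_axioms[of "restrict_space borel X"] X_borel
    by (simp add: space_restrict_space)
  show "sigma_sets X {C. clopen_in X C} \<subseteq> sets (restrict_space borel X)"
    using clopen_in_sets_restrict_borel[OF \<open>closed X\<close>] by (intro sigma_sets_subset) auto
  have "X \<inter> B \<in> sigma_sets X {C. clopen_in X C}" if "B \<in> sigma_sets UNIV {S. open S}" for B
    using that
  proof induction
    case (Basic G)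
    then have "open G"
      by simp
    obtain D :: "nat \<Rightarrow> 'a set" where "\<And>m. clopen_in X (D m)" "G \<inter> X = (\<Union>m. D m)"
      using open_Int_eq_UN_clopen_in[OF X \<open>open G\<close>] by blast
    then show ?case
      by (auto simp: Int_commute intro: sigma_sets.Union sigma_sets.Basic)
  next
    case (Compl B)
    have "X \<inter> (UNIV - B) = X - (X \<inter> B)"
      by blast
    then show ?case
      using sigma_sets.Compl[OF Compl.IH] by simp
  next
    case (Union B)
    have "X \<inter> (\<Union>i. B i) = (\<Union>i. X \<inter> B i)"
      by blast
    then show ?case
      using sigma_sets.Union[of "\<lambda>i. X \<inter> B i", OF Union.IH] by simp
  qed (simp add: sigma_sets.Empty)
  then show "sets (restrict_space borel X) \<subseteq> sigma_sets X {C. clopen_in X C}"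
    unfolding sets_restrict_space sets_borel by blast
qed

lemma decseq_compact_eventually_empty:
  fixes A :: "nat \<Rightarrow> 'a::t2_space set"
  assumes "\<And>i. compact (A i)" "decseq A" "(\<Inter>i. A i) = {}"
  obtains i where "A i = {}"
proof -
  have "\<exists>i. A i = {}"
  proof (rule ccontr)
    assume nonempty: "\<nexists>i. A i = {}"
    have "A 0 \<inter> \<Inter>\<F> \<noteq> {}" if \<F>: "finite \<F>" "\<F> \<subseteq> range A" for \<F>
    proof -
      obtain J where J: "finite J" "\<F> = A ` J"
        using finite_subset_image[OF \<F>] by blast
      have "A (Max (insert 0 J)) \<subseteq> A j" if "j \<in> insert 0 J" for j
        using decseqD[OF \<open>decseq A\<close>] Max_ge[of "insert 0 J" j] J(1) that by auto
      then have "A (Max (insert 0 J)) \<subseteq> A 0 \<inter> \<Inter>\<F>"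
        using J(2) by blast
      then show ?thesis
        using nonempty by (metis Int_absorb1 le_infI2 subset_empty)
    qed
    then have "A 0 \<inter> \<Inter>(range A) \<noteq> {}"
      using compact_imp_fip[OF assms(1)[of 0], of "range A"] assms(1) by (auto intro: compact_imp_closed)
    with assms(3) show False
      by blast
  qed
  with that show thesis
    by blast
qed

lemma exists_cluster_point_unit_cube:
  fixes a :: "nat \<Rightarrow> 'b \<Rightarrow> real"
  assumes "\<And>n i. a n i \<in> {0..1}"
  obtains p where "\<And>i. p i \<in> {0..1}"
    "\<And>I e N. finite I \<Longrightarrow> e > 0 \<Longrightarrow> \<exists>n\<ge>N. \<forall>i\<in>I. \<bar>a n i - p i\<bar> < e"
proof -
  define K :: "('b \<Rightarrow> real) set" where "K = PiE UNIV (\<lambda>_. {0..1})"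
  have "compactin (product_topology (\<lambda>_. euclidean) UNIV) K"
    unfolding K_def by (subst compactin_PiE) simp
  then have "compact K"
    by (simp add: euclidean_product_topology)
  moreover have "filtermap a sequentially \<noteq> bot"
    by (simp add: filtermap_bot_iff)
  moreover have "eventually (\<lambda>x. x \<in> K) (filtermap a sequentially)"
    unfolding eventually_filtermap K_def PiE_UNIV_domain using assms by simp
  ultimately obtain p where "p \<in> K" and p: "inf (nhds p) (filtermap a sequentially) \<noteq> bot"
    unfolding compact_filter by blast
  have "\<exists>n\<ge>N. \<forall>i\<in>I. \<bar>a n i - p i\<bar> < e" if "finite I" "e > 0" for I e N
  proof -
    define V where "V = {f. \<forall>i\<in>I. f (id i) \<in> ball (p i) e}"
    have "open V"
      unfolding V_def by (rule product_topology_basis') (use that in auto)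
    moreover have "p \<in> V"
      unfolding V_def using that by simp
    ultimately have near_p: "eventually (\<lambda>f. f \<in> V) (nhds p)"
      by (rule eventually_nhds_in_open)
    have "frequently (\<lambda>f. f \<in> V) (filtermap a sequentially)"
    proof (rule ccontr)
      assume "\<not> frequently (\<lambda>f. f \<in> V) (filtermap a sequentially)"
      then have "eventually (\<lambda>f. f \<notin> V) (filtermap a sequentially)"
        by (simp add: not_frequently)
      with near_p have "eventually (\<lambda>f. False) (inf (nhds p) (filtermap a sequentially))"
        unfolding eventually_inf by blast
      with p show False
        by (simp add: eventually_False)
    qed
    then show ?thesis
      unfolding frequently_filtermap frequently_sequentially V_def
      by (simp add: dist_real_def abs_minus_commute)
  qed
  moreover have "p i \<in> {0..1}" for i
    using \<open>p \<in> K\<close> unfolding K_def PiE_UNIV_domain by auto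
  ultimately show thesis
    using that by blast
qed

definition orbit_average :: "('a \<Rightarrow> 'a) \<Rightarrow> 'a \<Rightarrow> nat \<Rightarrow> 'a set \<Rightarrow> real" where
  "orbit_average T x n C = (\<Sum>k\<le>n. indicator C ((T ^^ k) x)) / real (Suc n)"

lemma orbit_average_bounds: "orbit_average T x n C \<in> {0..1}"
proof -
  have "(\<Sum>k\<le>n. indicator C ((T ^^ k) x)) \<le> real (card {..n}) * 1"
    by (rule sum_bounded_above) (simp add: indicator_def)
  then show ?thesis
    unfolding orbit_average_def by (simp add: sum_nonneg)
qed

lemma orbit_average_Un:
  assumes "C \<inter> D = {}"
  shows "orbit_average T x n (C \<union> D) = orbit_average T x n C + orbit_average T x n D"
proof -
  have "indicator (C \<union> D) y = (indicator C y + indicator D y :: real)" for y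
    using assms by (auto simp: indicator_def)
  then show ?thesis
    unfolding orbit_average_def by (simp add: sum.distrib add_divide_distrib)
qed

lemma orbit_average_space:
  assumes "\<And>k. (T ^^ k) x \<in> X"
  shows "orbit_average T x n X = 1"
  using assms unfolding orbit_average_def by simp

lemma orbit_average_preimage:
  assumes "\<And>k. (T ^^ k) x \<in> X"
  shows "\<bar>orbit_average T x n (T -` C \<inter> X) - orbit_average T x n C\<bar> \<le> 1 / real (Suc n)"
proof -
  define g where "g k = (indicator C ((T ^^ k) x) :: real)" for k
  have "indicator (T -` C \<inter> X) ((T ^^ k) x) = g (Suc k)" for k
    using assms[of k] by (simp add: g_def indicator_def)
  then have "orbit_average T x n (T -` C \<inter> X) - orbit_average T x n C
      = ((\<Sum>k\<le>n. g (Suc k)) - (\<Sum>k\<le>n. g k)) / real (Suc n)"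
    unfolding orbit_average_def g_def by (simp add: diff_divide_distrib)
  also have "(\<Sum>k\<le>n. g (Suc k)) - (\<Sum>k\<le>n. g k) = g (Suc n) - g 0"
    using sum.atMost_Suc_shift[of g n] sum.atMost_Suc[of g n] by simp
  finally show ?thesis
    unfolding abs_divide by (simp add: divide_right_mono g_def indicator_def)
qed

lemma exists_invariant_mean:
  assumes "x \<in> X" "\<And>x. x \<in> X \<Longrightarrow> T x \<in> X"
  obtains p :: "'a set \<Rightarrow> real" where "\<And>C. p C \<in> {0..1}" "p X = 1"
    "\<And>C D. C \<inter> D = {} \<Longrightarrow> p (C \<union> D) = p C + p D"
    "\<And>C. p (T -` C \<inter> X) = p C"
proof -
  have orbit: "(T ^^ k) x \<in> X" for k
    by (induction k) (auto simp: assms)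
  obtain p where p01: "\<And>C. p C \<in> {0..1}"
    and cluster: "\<And>I e N. finite I \<Longrightarrow> e > 0 \<Longrightarrow> \<exists>n\<ge>N. \<forall>C\<in>I. \<bar>orbit_average T x n C - p C\<bar> < e"
    using exists_cluster_point_unit_cube[of "orbit_average T x", OF orbit_average_bounds] by blast
  have "p X = 1"
  proof (rule dense_eq0_I[of "p X - 1", simplified])
    fix e :: real assume "e > 0"
    then obtain n where "\<bar>orbit_average T x n X - p X\<bar> < e"
      using cluster[of "{X}" e 0] by auto
    then show "\<bar>p X - 1\<bar> \<le> e"
      using orbit_average_space[OF orbit] by simp
  qed
  moreover have "p (C \<union> D) = p C + p D" if "C \<inter> D = {}" for C D
  proof (rule dense_eq0_I[of "p (C \<union> D) - (p C + p D)", simplified])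
    fix e :: real assume "e > 0"
    then obtain n where "\<bar>orbit_average T x n (C \<union> D) - p (C \<union> D)\<bar> < e / 3"
      "\<bar>orbit_average T x n C - p C\<bar> < e / 3" "\<bar>orbit_average T x n D - p D\<bar> < e / 3"
      using cluster[of "{C \<union> D, C, D}" "e / 3" 0] by auto
    then show "\<bar>p (C \<union> D) - (p C + p D)\<bar> \<le> e"
      using orbit_average_Un[OF that, of T x n] by arith
  qed
  moreover have "p (T -` C \<inter> X) = p C" for C
  proof (rule dense_eq0_I[of "p (T -` C \<inter> X) - p C", simplified])
    fix e :: real assume "e > 0"
    then obtain N :: nat where N: "1 / real (Suc N) < e / 3"
      using reals_Archimedean[of "e / 3"] by (auto simp: inverse_eq_divide)
    obtain n where "n \<ge> N"
      "\<bar>orbit_average T x n (T -` C \<inter> X) - p (T -` C \<inter> X)\<bar> < e / 3"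
      "\<bar>orbit_average T x n C - p C\<bar> < e / 3"
      using cluster[of "{T -` C \<inter> X, C}" "e / 3" N] \<open>e > 0\<close> by auto
    moreover have "1 / real (Suc n) \<le> 1 / real (Suc N)"
      using \<open>n \<ge> N\<close> by (simp add: frac_le)
    ultimately show "\<bar>p (T -` C \<inter> X) - p C\<bar> \<le> e"
      using orbit_average_preimage[OF orbit, of n C] N by arith
  qed
  ultimately show thesis
    using that p01 by blast
qed

lemma clopen_content_extends_to_measure:
  fixes X :: "'a::metric_space set" and p :: "'a set \<Rightarrow> real"
  assumes X: "compact X" "\<forall>x\<in>X. connected_component_set X x = {x}"
    and nonneg: "\<And>C. clopen_in X C \<Longrightarrow> 0 \<le> p C" and "p X = 1"
    and additive: "\<And>C D. clopen_in X C \<Longrightarrow> clopen_in X D \<Longrightarrow> C \<inter> D = {} \<Longrightarrow> p (C \<union> D) = p C + p D"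
  obtains \<nu> where "sets \<nu> = sets (restrict_space borel X)" "space \<nu> = X" "prob_space \<nu>"
    "\<And>C. clopen_in X C \<Longrightarrow> emeasure \<nu> C = p C"
proof -
  interpret algebra X "{C. clopen_in X C}"
    by (rule algebra_clopen_in)
  have "clopen_in X {}" "clopen_in X X"
    by (simp_all add: clopen_in_def)
  then have "p {} = 0"
    using additive[of "{}" "{}"] by simp
  then have "positive {C. clopen_in X C} (\<lambda>C. ennreal (p C))"
    unfolding positive_def by simp
  moreover have "additive {C. clopen_in X C} (\<lambda>C. ennreal (p C))"
    unfolding additive_def using additive nonneg by (simp add: ennreal_plus)
  moreover have "(\<lambda>i. ennreal (p (A i))) \<longlonglongrightarrow> 0"
    if A: "range A \<subseteq> {C. clopen_in X C}" "decseq A" "(\<Inter>i. A i) = {}" for A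
  proof -
    have "compact (A i)" for i
    proof -
      have "A i \<subseteq> X" "closed (A i)"
        using A(1) compact_imp_closed[OF X(1)] by (auto simp: clopen_in_closed_iff)
      then show ?thesis
        using compact_Int_closed[OF X(1), of "A i"] by (simp add: Int_absorb1)
    qed
    then obtain i where "A i = {}"
      using decseq_compact_eventually_empty A(2,3) by blast
    then have "\<forall>j\<ge>i. A j = {}"
      using decseqD[OF A(2)] by blast
    then show ?thesis
      using \<open>p {} = 0\<close> by (intro tendsto_eventually) (auto simp: eventually_sequentially intro!: exI[of _ i])
  qed
  ultimately obtain \<mu> where \<mu>: "\<And>C. clopen_in X C \<Longrightarrow> \<mu> C = ennreal (p C)"
    and ms: "measure_space X (sigma_sets X {C. clopen_in X C}) \<mu>"
    using caratheodory_empty_continuous[of "\<lambda>C. ennreal (p C)"] by auto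
  define \<nu> where "\<nu> = measure_of X (sigma_sets X {C. clopen_in X C}) \<mu>"
  have "sigma_algebra X (sigma_sets X {C. clopen_in X C})"
    using ms by (simp add: measure_space_def)
  then have sets: "sets \<nu> = sets (restrict_space borel X)" and space: "space \<nu> = X"
    unfolding \<nu>_def using sets_restrict_borel_eq_sigma_clopen_in[OF X]
    by (simp_all add: sigma_algebra.sets_measure_of_eq sigma_algebra.space_measure_of_eq)
  have emeasure: "emeasure \<nu> C = p C" if "clopen_in X C" for C
    using ms that emeasure_measure_of_sigma[of X "sigma_sets X {C. clopen_in X C}" \<mu> C] \<mu>[OF that]
    unfolding \<nu>_def measure_space_def by auto
  have "prob_space \<nu>"
    using emeasure[OF \<open>clopen_in X X\<close>] \<open>p X = 1\<close> space by (intro prob_spaceI) simp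
  with sets space emeasure show thesis
    using that by blast
qed

lemma continuous_on_measurable_restrict_borel:
  assumes "continuous_on S f" "f \<in> S \<rightarrow> T"
  shows "f \<in> measurable (restrict_space borel S) (restrict_space borel T)"
proof (rule measurable_restrict_space2)
  show "f \<in> space (restrict_space borel S) \<rightarrow> T"
    using assms(2) by (simp add: space_restrict_space)
  show "f \<in> borel_measurable (restrict_space borel S)"
    by (rule borel_measurable_continuous_on_restrict[OF assms(1)])
qed

lemma invariant_measures_nonempty:
  fixes X :: "'a::metric_space set"
  assumes X: "compact X" "\<forall>x\<in>X. connected_component_set X x = {x}" "X \<noteq> {}"
    and T: "continuous_on X T" "T \<in> X \<rightarrow> X"
  shows "invariant_measures X T \<noteq> {}"
proof -
  obtain x0 where "x0 \<in> X"
    using X(3) by blast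
  then obtain p :: "'a set \<Rightarrow> real" where p01: "\<And>C. p C \<in> {0..1}" and "p X = 1"
    and additive: "\<And>C D. C \<inter> D = {} \<Longrightarrow> p (C \<union> D) = p C + p D"
    and invariant: "\<And>C. p (T -` C \<inter> X) = p C"
    using exists_invariant_mean[of x0 X T] T(2) by blast
  obtain \<nu> where sets: "sets \<nu> = sets (restrict_space borel X)" and space: "space \<nu> = X"
    and "prob_space \<nu>" and \<nu>: "\<And>C. clopen_in X C \<Longrightarrow> emeasure \<nu> C = p C"
    by (rule clopen_content_extends_to_measure[OF X(1,2), of p]) (use p01 additive \<open>p X = 1\<close> in auto)
  have T_meas: "T \<in> measurable \<nu> \<nu>"
    using continuous_on_measurable_restrict_borel[OF T] measurable_cong_sets[OF sets sets] by simp
  have "\<nu> = distr \<nu> \<nu> T"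
  proof (rule measure_eqI_generator_eq[where E="{C. clopen_in X C}" and \<Omega>=X and A="\<lambda>_. X"])
    show "Int_stable {C. clopen_in X C}"
      by (rule Int_stable_clopen_in)
    show "{C. clopen_in X C} \<subseteq> Pow X"
      by (auto simp: clopen_in_def dest: openin_imp_subset)
    show "sets \<nu> = sigma_sets X {C. clopen_in X C}" "sets (distr \<nu> \<nu> T) = sigma_sets X {C. clopen_in X C}"
      using sets sets_restrict_borel_eq_sigma_clopen_in[OF X(1,2)] by simp_all
    show "range (\<lambda>_. X) \<subseteq> {C. clopen_in X C}" "(\<Union>_. X) = X"
      by (auto simp: clopen_in_def)
    show "emeasure \<nu> X \<noteq> \<infinity>"
      using \<open>prob_space \<nu>\<close> space prob_space.emeasure_space_1 by fastforce
  next
    fix C assume "C \<in> {C. clopen_in X C}"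
    then have "clopen_in X C" "clopen_in X (X \<inter> T -` C)"
      using clopen_in_continuous_preimage[OF T] by auto
    moreover have "C \<in> sets \<nu>"
      using \<open>clopen_in X C\<close> sets sets_restrict_borel_eq_sigma_clopen_in[OF X(1,2)] by auto
    ultimately show "emeasure \<nu> C = emeasure (distr \<nu> \<nu> T) C"
      using \<nu> invariant emeasure_distr[OF T_meas] space by (simp add: Int_commute)
  qed
  then have "emeasure \<nu> (T -` A \<inter> space \<nu>) = emeasure \<nu> A" if "A \<in> sets \<nu>" for A
    using emeasure_distr[OF T_meas that] by simp
  then have "\<nu> \<in> invariant_measures X T"
    unfolding invariant_measures_def using sets \<open>prob_space \<nu>\<close> T_meas by blast
  then show ?thesis
    by blast
qed

lemma homeomorphism_funpow:
  assumes "homeomorphism X X T S"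
  shows "homeomorphism X X (T ^^ n) (S ^^ n)"
proof (induction n)
  case 0
  then show ?case
    by (simp add: homeomorphism_ident)
next
  case (Suc n)
  have "T ^^ Suc n = T \<circ> T ^^ n" "S ^^ Suc n = S ^^ n \<circ> S"
    by (simp, rule funpow_Suc_right)
  with homeomorphism_compose[OF Suc assms] show ?case
    by (simp only:)
qed

lemma invariant_measuresD:
  assumes "\<mu> \<in> invariant_measures X T"
  shows "sets \<mu> = sets (restrict_space borel X)" "space \<mu> = X" "prob_space \<mu>"
    "T \<in> measurable \<mu> \<mu>" "\<And>A. A \<in> sets \<mu> \<Longrightarrow> emeasure \<mu> (T -` A \<inter> X) = emeasure \<mu> A"
proof -
  show sets: "sets \<mu> = sets (restrict_space borel X)"
    using assms by (simp add: invariant_measures_def)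
  show space: "space \<mu> = X"
    using sets_eq_imp_space_eq[OF sets] by (simp add: space_restrict_space)
  show "prob_space \<mu>" "T \<in> measurable \<mu> \<mu>"
    using assms by (simp_all add: invariant_measures_def)
  show "\<And>A. A \<in> sets \<mu> \<Longrightarrow> emeasure \<mu> (T -` A \<inter> X) = emeasure \<mu> A"
    using assms space by (simp add: invariant_measures_def)
qed

lemma invariant_measures_funpow:
  assumes "\<mu> \<in> invariant_measures X T"
  shows "\<mu> \<in> invariant_measures X (T ^^ n)"
proof (induction n)
  case 0
  have "A \<inter> X = A" if "A \<in> sets \<mu>" for A
    using sets.sets_into_space[OF that] invariant_measuresD(2)[OF assms] by blast
  with assms show ?case
    by (simp add: invariant_measures_def)
next
  case (Suc n)
  note \<mu> = invariant_measuresD[OF assms] and \<mu>n = invariant_measuresD[OF Suc]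
  have "T ^^ n \<circ> T \<in> measurable \<mu> \<mu>"
    using \<mu>(4) \<mu>n(4) by (rule measurable_comp)
  moreover have "emeasure \<mu> ((T ^^ n \<circ> T) -` A \<inter> X) = emeasure \<mu> A" if "A \<in> sets \<mu>" for A
  proof -
    have "(T ^^ n \<circ> T) -` A \<inter> X = T -` ((T ^^ n) -` A \<inter> X) \<inter> X"
      using measurable_space[OF \<mu>(4)] \<mu>(2) by auto
    then have "emeasure \<mu> ((T ^^ n \<circ> T) -` A \<inter> X) = emeasure \<mu> (T -` ((T ^^ n) -` A \<inter> X) \<inter> X)"
      by (simp only:)
    also have "\<dots> = emeasure \<mu> ((T ^^ n) -` A \<inter> X)"
      using measurable_sets[OF \<mu>n(4) that] \<mu>(2) by (intro \<mu>(5)) simp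
    also have "\<dots> = emeasure \<mu> A"
      by (rule \<mu>n(5)[OF that])
    finally show ?thesis .
  qed
  ultimately have "\<mu> \<in> invariant_measures X (T ^^ n \<circ> T)"
    unfolding invariant_measures_def using \<mu>(1-3) by blast
  then show ?case
    by (simp only: funpow_Suc_right)
qed

lemma invariant_measures_inverse:
  assumes "homeomorphism X X T S" "\<mu> \<in> invariant_measures X T"
  shows "\<mu> \<in> invariant_measures X S"
proof -
  note \<mu> = invariant_measuresD[OF assms(2)]
  have "continuous_on X S" "S \<in> X \<rightarrow> X"
    using assms(1) unfolding homeomorphism_def by auto
  then have "S \<in> measurable \<mu> \<mu>"
    using continuous_on_measurable_restrict_borel measurable_cong_sets[OF \<mu>(1) \<mu>(1)] by blast
  moreover have "emeasure \<mu> (S -` A \<inter> X) = emeasure \<mu> A" if "A \<in> sets \<mu>" for A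
  proof -
    have "S -` A \<inter> X \<in> sets \<mu>"
      using measurable_sets[OF \<open>S \<in> measurable \<mu> \<mu>\<close> that] \<mu>(2) by simp
    moreover have "T -` (S -` A \<inter> X) \<inter> X = A"
      using assms(1) sets.sets_into_space[OF that] \<mu>(2) unfolding homeomorphism_def by force
    ultimately show ?thesis
      using \<mu>(5) by metis
  qed
  ultimately show ?thesis
    using assms(2) \<mu>(2) by (simp add: invariant_measures_def)
qed

lemma return_time_measurable:
  assumes "\<mu> \<in> invariant_measures X T" "U \<in> sets \<mu>"
  shows "return_time U T \<in> measurable \<mu> (count_space UNIV)"
proof -
  have "(\<lambda>x. 0 < n \<and> (T ^^ n) x \<in> U) \<in> measurable \<mu> (count_space UNIV)" for n
  proof -
    have "(T ^^ n) -` U \<inter> space \<mu> \<in> sets \<mu>"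
      using invariant_measuresD(4)[OF invariant_measures_funpow[OF assms(1)]] assms(2)
      by (rule measurable_sets)
    moreover have "{x \<in> space \<mu>. 0 < n \<and> (T ^^ n) x \<in> U} = (if 0 < n then (T ^^ n) -` U \<inter> space \<mu> else {})"
      by auto
    ultimately show ?thesis
      by (cases "0 < n") (simp_all add: pred_def)
  qed
  then show ?thesis
    unfolding return_time_def[abs_def] by (rule measurable_Least)
qed

text \<open>
  On the points \<open>P k\<close> of return time \<open>k\<close> the induced map is \<open>T ^^ k\<close>; as it is a bijection of \<open>U\<close>,
  the images \<open>T\<^sup>k (P k) = (S ^^ k) -` P k \<inter> X\<close> partition \<open>B\<close>.
\<close>

lemma induced_map_return_time_partition:
  assumes hom: "homeomorphism X X T S" and "U \<subseteq> X"
    and bij: "bij_betw (induced_map U T) U U" and "B \<subseteq> U"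
    and P_def: "\<And>k. P k = {u \<in> U. return_time U T u = k \<and> (T ^^ k) u \<in> B}"
  shows "{u \<in> U. induced_map U T u \<in> B} = (\<Union>k. P k)" "disjoint_family P"
    "B = (\<Union>k. (S ^^ k) -` P k \<inter> X)" "disjoint_family (\<lambda>k. (S ^^ k) -` P k \<inter> X)"
proof -
  have T_S: "(T ^^ k) ((S ^^ k) y) = y" and S_T: "(S ^^ k) ((T ^^ k) y) = y"
    and T_X: "(T ^^ k) y \<in> X" if "y \<in> X" for y k
    using homeomorphism_funpow[OF hom, of k] that unfolding homeomorphism_def by auto
  show "{u \<in> U. induced_map U T u \<in> B} = (\<Union>k. P k)" "disjoint_family P"
    unfolding P_def induced_map_def disjoint_family_on_def by auto
  show "disjoint_family (\<lambda>k. (S ^^ k) -` P k \<inter> X)"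
    unfolding disjoint_family_on_def
  proof (intro ballI impI equals0I)
    fix k j y assume "k \<noteq> j" "y \<in> ((S ^^ k) -` P k \<inter> X) \<inter> ((S ^^ j) -` P j \<inter> X)"
    then have "y \<in> X" "(S ^^ k) y \<in> P k" "(S ^^ j) y \<in> P j"
      by auto
    then have "induced_map U T ((S ^^ k) y) = induced_map U T ((S ^^ j) y)"
      "(S ^^ k) y \<in> U" "(S ^^ j) y \<in> U"
      unfolding P_def induced_map_def using T_S by auto
    then have "(S ^^ k) y = (S ^^ j) y"
      using bij_betw_imp_inj_on[OF bij] by (auto dest: inj_onD)
    with \<open>(S ^^ k) y \<in> P k\<close> \<open>(S ^^ j) y \<in> P j\<close> \<open>k \<noteq> j\<close> show False
      unfolding P_def by auto
  qed
  show "B = (\<Union>k. (S ^^ k) -` P k \<inter> X)"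
  proof
    show "B \<subseteq> (\<Union>k. (S ^^ k) -` P k \<inter> X)"
    proof
      fix y assume "y \<in> B"
      then obtain u where "u \<in> U" "induced_map U T u = y"
        using \<open>B \<subseteq> U\<close> bij_betw_imp_surj_on[OF bij] by (metis imageE subsetD)
      then have "y \<in> (S ^^ return_time U T u) -` P (return_time U T u) \<inter> X"
        using \<open>y \<in> B\<close> \<open>U \<subseteq> X\<close> S_T T_X unfolding P_def induced_map_def by auto
      then show "y \<in> (\<Union>k. (S ^^ k) -` P k \<inter> X)"
        by blast
    qed
    show "(\<Union>k. (S ^^ k) -` P k \<inter> X) \<subseteq> B"
      unfolding P_def using T_S by auto
  qed
qed

lemma induced_map_measure_preserving:
  assumes hom: "homeomorphism X X T S" and \<mu>: "\<mu> \<in> invariant_measures X T"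
    and U: "U \<in> sets \<mu>" and bij: "bij_betw (induced_map U T) U U"
    and B: "B \<in> sets \<mu>" "B \<subseteq> U"
  shows "emeasure \<mu> {u \<in> U. induced_map U T u \<in> B} = emeasure \<mu> B"
proof -
  note \<mu>X = invariant_measuresD(1,2)[OF \<mu>]
  have "U \<subseteq> X"
    using sets.sets_into_space[OF U] \<mu>X(2) by simp
  define P where "P k = {u \<in> U. return_time U T u = k \<and> (T ^^ k) u \<in> B}" for k
  define Q where "Q k = (S ^^ k) -` P k \<inter> X" for k
  note partition = induced_map_return_time_partition[OF hom \<open>U \<subseteq> X\<close> bij B(2) P_def, folded Q_def]
  have P_sets: "P k \<in> sets \<mu>" for k
  proof -
    have "return_time U T -` {k} \<inter> X \<in> sets \<mu>"
      using measurable_sets[OF return_time_measurable[OF \<mu> U], of "{k}"] \<mu>X(2) by simp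
    moreover have "(T ^^ k) -` B \<inter> X \<in> sets \<mu>"
      using measurable_sets[OF invariant_measuresD(4)[OF invariant_measures_funpow[OF \<mu>]] B(1)] \<mu>X(2)
      by simp
    moreover have "P k = U \<inter> (return_time U T -` {k} \<inter> X) \<inter> ((T ^^ k) -` B \<inter> X)"
      unfolding P_def using \<open>U \<subseteq> X\<close> by auto
    ultimately show ?thesis
      using U by auto
  qed
  note \<mu>S = invariant_measures_funpow[OF invariant_measures_inverse[OF hom \<mu>]]
  have Q_sets: "Q k \<in> sets \<mu>" and Q_P: "emeasure \<mu> (Q k) = emeasure \<mu> (P k)" for k
    unfolding Q_def using measurable_sets[OF invariant_measuresD(4)[OF \<mu>S] P_sets] \<mu>X(2)
      invariant_measuresD(5)[OF \<mu>S P_sets] by simp_all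
  have "emeasure \<mu> {u \<in> U. induced_map U T u \<in> B} = (\<Sum>k. emeasure \<mu> (P k))"
    unfolding partition(1) by (rule suminf_emeasure[symmetric]) (use P_sets partition(2) in auto)
  also have "\<dots> = (\<Sum>k. emeasure \<mu> (Q k))"
    by (simp only: Q_P)
  also have "\<dots> = emeasure \<mu> B"
    unfolding partition(3) by (rule suminf_emeasure) (use Q_sets partition(4) in auto)
  finally show ?thesis .
qed

lemma orbit_meets_openin:
  assumes hom: "homeomorphism X X T S"
    and dense: "\<forall>x\<in>X. X \<subseteq> closure ({(T ^^ n) x | n. True} \<union> {(S ^^ n) x | n. True})"
    and "x \<in> X" "openin (top_of_set X) W" "W \<noteq> {}"
  obtains n where "(T ^^ n) x \<in> W \<or> (S ^^ n) x \<in> W"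
proof -
  define orbit where "orbit = {(T ^^ n) x | n. True} \<union> {(S ^^ n) x | n. True}"
  obtain G where "open G" and G: "W = X \<inter> G"
    using \<open>openin (top_of_set X) W\<close> unfolding openin_open by blast
  then have "G \<inter> closure orbit \<noteq> {}"
    using dense \<open>x \<in> X\<close> \<open>W \<noteq> {}\<close> unfolding orbit_def by blast
  then have "G \<inter> orbit \<noteq> {}"
    using open_Int_closure_eq_empty[OF \<open>open G\<close>] by blast
  moreover have "orbit \<subseteq> X"
    using homeomorphism_funpow[OF hom] \<open>x \<in> X\<close> unfolding orbit_def homeomorphism_def by blast
  ultimately show thesis
    using that G unfolding orbit_def by blast
qed

lemma orbit_meets_openin_uniformly:
  assumes "compact X" and hom: "homeomorphism X X T S"
    and "\<forall>x\<in>X. X \<subseteq> closure ({(T ^^ n) x | n. True} \<union> {(S ^^ n) x | n. True})"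
    and W: "openin (top_of_set X) W" "W \<noteq> {}"
  obtains N where "X \<subseteq> (\<Union>n\<le>N. (T ^^ n) -` W \<union> (S ^^ n) -` W)"
proof -
  have "\<exists>V. open V \<and> X \<inter> V = X \<inter> ((T ^^ n) -` W \<union> (S ^^ n) -` W)" for n
  proof -
    have "continuous_on X (T ^^ n)" "T ^^ n \<in> X \<rightarrow> X" "continuous_on X (S ^^ n)" "S ^^ n \<in> X \<rightarrow> X"
      using homeomorphism_funpow[OF hom, of n] unfolding homeomorphism_def by auto
    then have "openin (top_of_set X) (X \<inter> (T ^^ n) -` W \<union> X \<inter> (S ^^ n) -` W)"
      using continuous_openin_preimage[OF _ _ W(1)] by (intro openin_Un) auto
    then show ?thesis
      unfolding openin_open by (metis Int_Un_distrib)
  qed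
  then obtain V where V: "\<And>n. open (V n)" "\<And>n. X \<inter> V n = X \<inter> ((T ^^ n) -` W \<union> (S ^^ n) -` W)"
    by metis
  have "X \<subseteq> (\<Union>n. V n)"
  proof
    fix x assume "x \<in> X"
    then obtain n where "(T ^^ n) x \<in> W \<or> (S ^^ n) x \<in> W"
      using orbit_meets_openin[OF hom assms(3) _ W] by blast
    then show "x \<in> (\<Union>n. V n)"
      using V(2)[of n] \<open>x \<in> X\<close> by blast
  qed
  then obtain J where "finite J" and J: "X \<subseteq> (\<Union>n\<in>J. V n)"
    using compactE_image[OF \<open>compact X\<close>, of UNIV V] V(1) by metis
  then obtain N where "J \<subseteq> {..N}"
    by (auto simp: finite_nat_iff_bounded_le)
  have "X \<subseteq> (\<Union>n\<le>N. (T ^^ n) -` W \<union> (S ^^ n) -` W)"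
  proof
    fix x assume "x \<in> X"
    then obtain n where "n \<in> J" "x \<in> X \<inter> V n"
      using J by blast
    then show "x \<in> (\<Union>n\<le>N. (T ^^ n) -` W \<union> (S ^^ n) -` W)"
      using \<open>J \<subseteq> {..N}\<close> V(2)[of n] by blast
  qed
  then show thesis
    by (rule that)
qed

lemma measure_ge_if_translates_cover:
  assumes hom: "homeomorphism X X T S" and \<mu>: "\<mu> \<in> invariant_measures X T" and "W \<in> sets \<mu>"
    and cover: "X \<subseteq> (\<Union>n\<le>N. (T ^^ n) -` W \<union> (S ^^ n) -` W)"
  shows "1 \<le> 2 * real (Suc N) * measure \<mu> W"
proof -
  note \<mu>X = invariant_measuresD(1-3)[OF \<mu>]
  interpret prob_space \<mu>
    by (rule \<mu>X(3))
  define V where "V n = ((T ^^ n) -` W \<inter> X) \<union> ((S ^^ n) -` W \<inter> X)" for n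
  have \<mu>T: "\<mu> \<in> invariant_measures X (T ^^ n)" and \<mu>S: "\<mu> \<in> invariant_measures X (S ^^ n)" for n
    using invariant_measures_funpow[OF \<mu>] invariant_measures_funpow[OF invariant_measures_inverse[OF hom \<mu>]]
    by auto
  have T_sets: "(T ^^ n) -` W \<inter> X \<in> sets \<mu>" and S_sets: "(S ^^ n) -` W \<inter> X \<in> sets \<mu>" for n
    using measurable_sets[OF invariant_measuresD(4)[OF \<mu>T] \<open>W \<in> sets \<mu>\<close>]
      measurable_sets[OF invariant_measuresD(4)[OF \<mu>S] \<open>W \<in> sets \<mu>\<close>] \<mu>X(2) by auto
  have V_measure: "measure \<mu> (V n) \<le> 2 * measure \<mu> W" for n
  proof -
    have "measure \<mu> (V n) \<le> measure \<mu> ((T ^^ n) -` W \<inter> X) + measure \<mu> ((S ^^ n) -` W \<inter> X)"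
      unfolding V_def using T_sets S_sets by (rule measure_Un_le)
    also have "\<dots> = 2 * measure \<mu> W"
      using invariant_measuresD(5)[OF \<mu>T \<open>W \<in> sets \<mu>\<close>] invariant_measuresD(5)[OF \<mu>S \<open>W \<in> sets \<mu>\<close>]
      by (simp add: measure_def)
    finally show ?thesis .
  qed
  have "1 = measure \<mu> X"
    using prob_space \<mu>X(2) by simp
  also have "\<dots> \<le> measure \<mu> (\<Union>n\<le>N. V n)"
    using cover T_sets S_sets by (intro finite_measure_mono) (fastforce simp: V_def)+
  also have "\<dots> \<le> (\<Sum>n\<le>N. measure \<mu> (V n))"
    using T_sets S_sets by (intro finite_measure_subadditive_finite) (auto simp: V_def)
  also have "\<dots> \<le> (\<Sum>n\<le>N. 2 * measure \<mu> W)"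
    by (rule sum_mono) (rule V_measure)
  finally show ?thesis
    by (simp add: algebra_simps)
qed

lemma measure_proper_clopen_uniformly_bounded:
  fixes X :: "'a::metric_space set"
  assumes "compact X" and hom: "homeomorphism X X T S"
    and "\<forall>x\<in>X. X \<subseteq> closure ({(T ^^ n) x | n. True} \<union> {(S ^^ n) x | n. True})"
    and "clopen_in X U" "U \<subset> X"
  obtains q where "0 \<le> q" "q < 1" "\<And>\<mu>. \<mu> \<in> invariant_measures X T \<Longrightarrow> measure \<mu> U \<le> q"
proof -
  have "openin (top_of_set X) (X - U)" "X - U \<noteq> {}"
    using \<open>clopen_in X U\<close> \<open>U \<subset> X\<close> unfolding clopen_in_def by auto
  then obtain N where cover: "X \<subseteq> (\<Union>n\<le>N. (T ^^ n) -` (X - U) \<union> (S ^^ n) -` (X - U))"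
    using orbit_meets_openin_uniformly[OF assms(1-3)] by blast
  define K where "K = 2 * real (Suc N)"
  have "measure \<mu> U \<le> 1 - 1 / K" if \<mu>: "\<mu> \<in> invariant_measures X T" for \<mu>
  proof -
    note \<mu>X = invariant_measuresD(1-3)[OF \<mu>]
    have "U \<in> sets \<mu>"
      using clopen_in_sets_restrict_borel[OF compact_imp_closed[OF \<open>compact X\<close>] \<open>clopen_in X U\<close>] \<mu>X(1)
      by simp
    then have "measure \<mu> (X - U) = 1 - measure \<mu> U"
      using prob_space.prob_compl[OF \<mu>X(3)] \<mu>X(2) by simp
    moreover have "X - U \<in> sets \<mu>"
      using \<open>U \<in> sets \<mu>\<close> \<mu>X(2) by auto
    ultimately have "1 \<le> K * (1 - measure \<mu> U)"
      using measure_ge_if_translates_cover[OF hom \<mu> _ cover] unfolding K_def by simp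
    then show ?thesis
      unfolding K_def by (simp add: field_simps)
  qed
  moreover have "0 \<le> 1 - 1 / K" "1 - 1 / K < 1"
    unfolding K_def by simp_all
  ultimately show thesis
    using that by blast
qed

locale self_induced_system =
  fixes X U :: "'a::metric_space set" and T S \<phi> \<psi> :: "'a \<Rightarrow> 'a"
  assumes closed: "closed X"
    and homeo: "homeomorphism X X T S"
    and clopen: "clopen_in X U"
    and conjugacy: "homeomorphism X U \<phi> \<psi>"
    and conjugate: "\<forall>x\<in>X. \<phi> (T x) = induced_map U T (\<phi> x)"
begin

lemma T_X: "x \<in> X \<Longrightarrow> T x \<in> X" and S_X: "x \<in> X \<Longrightarrow> S x \<in> X"
  and S_T: "x \<in> X \<Longrightarrow> S (T x) = x" and T_S: "x \<in> X \<Longrightarrow> T (S x) = x"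
  and \<phi>_U: "x \<in> X \<Longrightarrow> \<phi> x \<in> U" and \<psi>_X: "u \<in> U \<Longrightarrow> \<psi> u \<in> X"
  and \<psi>_\<phi>: "x \<in> X \<Longrightarrow> \<psi> (\<phi> x) = x" and \<phi>_\<psi>: "u \<in> U \<Longrightarrow> \<phi> (\<psi> u) = u"
  using homeo conjugacy unfolding homeomorphism_def by auto

lemma U_X: "U \<subseteq> X"
  using clopen unfolding clopen_in_def by (auto dest: openin_imp_subset)

lemma induced_map_eq: "u \<in> U \<Longrightarrow> induced_map U T u = \<phi> (T (\<psi> u))"
  using conjugate \<psi>_X \<phi>_\<psi> by metis

lemma bij_betw_induced_map: "bij_betw (induced_map U T) U U"
proof (rule bij_betw_byWitness[where f'="\<lambda>u. \<phi> (S (\<psi> u))"])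
  show "\<forall>u\<in>U. \<phi> (S (\<psi> (induced_map U T u))) = u" "\<forall>u\<in>U. induced_map U T (\<phi> (S (\<psi> u))) = u"
    by (simp_all add: induced_map_eq \<phi>_U \<psi>_X T_X S_X \<psi>_\<phi> \<phi>_\<psi> S_T T_S)
  show "induced_map U T ` U \<subseteq> U" "(\<lambda>u. \<phi> (S (\<psi> u))) ` U \<subseteq> U"
    by (auto simp: induced_map_eq \<phi>_U \<psi>_X T_X S_X)
qed

lemma image_eq_preimage: "A \<subseteq> X \<Longrightarrow> \<phi> ` A = U \<inter> \<psi> -` A"
  using \<phi>_U \<psi>_\<phi> \<phi>_\<psi> by (auto intro!: image_eqI)

lemma image_preimage_eq: "A \<subseteq> X \<Longrightarrow> \<phi> ` (T -` A \<inter> X) = {u \<in> U. induced_map U T u \<in> \<phi> ` A}"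
  using image_eq_preimage[of A] image_eq_preimage[of "T -` A \<inter> X"]
  by (auto simp: induced_map_eq \<psi>_X \<psi>_\<phi> T_X subsetD)

lemma U_sets: "U \<in> sets (restrict_space borel X)"
  by (rule clopen_in_sets_restrict_borel[OF closed clopen])

lemma \<psi>_measurable: "\<psi> \<in> measurable (restrict_space borel U) (restrict_space borel X)"
  using conjugacy unfolding homeomorphism_def
  by (intro continuous_on_measurable_restrict_borel) auto

lemma sets_restrict_borel_U:
  "sets (restrict_space (restrict_space borel X) U) = sets (restrict_space borel U)"
  using U_X by (simp add: sets_restrict_restrict_space Int_absorb1)

lemma image_sets: "A \<in> sets (restrict_space borel X) \<Longrightarrow> \<phi> ` A \<in> sets (restrict_space borel X)"
proof -
  assume A: "A \<in> sets (restrict_space borel X)"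
  then have "\<psi> -` A \<inter> U \<in> sets (restrict_space borel U)"
    using measurable_sets[OF \<psi>_measurable A] by (simp add: space_restrict_space)
  moreover have "closed U"
    using clopen closed by (simp add: clopen_in_closed_iff)
  ultimately have "\<psi> -` A \<inter> U \<in> sets (restrict_space borel X)"
    using U_X closed by (auto simp: sets_restrict_space_iff)
  moreover have "A \<subseteq> X"
    using sets.sets_into_space[OF A] by (simp add: space_restrict_space)
  ultimately show ?thesis
    using image_eq_preimage by (simp add: Int_commute)
qed

definition pullback_measure :: "'a measure \<Rightarrow> 'a measure" where
  "pullback_measure \<mu> = distr (restrict_space \<mu> U) (restrict_space borel X) \<psi>"

lemma
  assumes \<mu>: "\<mu> \<in> invariant_measures X T"
  shows sets_pullback_measure: "sets (pullback_measure \<mu>) = sets (restrict_space borel X)"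
    and space_pullback_measure: "space (pullback_measure \<mu>) = X"
    and emeasure_pullback_measure:
      "A \<in> sets (restrict_space borel X) \<Longrightarrow> emeasure (pullback_measure \<mu>) A = emeasure \<mu> (\<phi> ` A)"
proof -
  note \<mu>X = invariant_measuresD[OF \<mu>]
  show "sets (pullback_measure \<mu>) = sets (restrict_space borel X)" "space (pullback_measure \<mu>) = X"
    unfolding pullback_measure_def by (simp_all add: space_restrict_space)
  assume A: "A \<in> sets (restrict_space borel X)"
  have \<psi>_meas: "\<psi> \<in> measurable (restrict_space \<mu> U) (restrict_space borel X)"
    using \<psi>_measurable measurable_cong_sets[OF _ refl]
      sets_restrict_space_cong[OF \<mu>X(1), of U] sets_restrict_borel_U by metis
  have "space (restrict_space \<mu> U) = U"
    using U_X \<mu>X(2) by (simp add: space_restrict_space Int_absorb2)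
  then have "emeasure (pullback_measure \<mu>) A = emeasure (restrict_space \<mu> U) (\<psi> -` A \<inter> U)"
    unfolding pullback_measure_def using emeasure_distr[OF \<psi>_meas A] by simp
  also have "\<dots> = emeasure \<mu> (\<psi> -` A \<inter> U)"
    using U_sets \<mu>X(1,2) U_X by (subst emeasure_restrict_space) (auto simp: Int_absorb2)
  also have "\<psi> -` A \<inter> U = \<phi> ` A"
    using image_eq_preimage sets.sets_into_space[OF A] by (auto simp: space_restrict_space)
  finally show "emeasure (pullback_measure \<mu>) A = emeasure \<mu> (\<phi> ` A)" .
qed

lemma pullback_measure_invariant:
  assumes \<mu>: "\<mu> \<in> invariant_measures X T" and A: "A \<in> sets (restrict_space borel X)"
  shows "emeasure (pullback_measure \<mu>) (T -` A \<inter> X) = emeasure (pullback_measure \<mu>) A"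
proof -
  have "A \<subseteq> X"
    using sets.sets_into_space[OF A] by (simp add: space_restrict_space)
  have T_meas: "T \<in> measurable (restrict_space borel X) (restrict_space borel X)"
    using homeo by (intro continuous_on_measurable_restrict_borel) (auto simp: homeomorphism_def)
  have "T -` A \<inter> X \<in> sets (restrict_space borel X)"
    using measurable_sets[OF T_meas A] by (simp add: space_restrict_space)
  then have "emeasure (pullback_measure \<mu>) (T -` A \<inter> X) = emeasure \<mu> {u \<in> U. induced_map U T u \<in> \<phi> ` A}"
    using emeasure_pullback_measure[OF \<mu>] image_preimage_eq[OF \<open>A \<subseteq> X\<close>] by simp
  also have "\<dots> = emeasure \<mu> (\<phi> ` A)"
  proof (rule induced_map_measure_preserving[OF homeo \<mu> _ bij_betw_induced_map])
    show "U \<in> sets \<mu>" "\<phi> ` A \<in> sets \<mu>"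
      using U_sets image_sets[OF A] invariant_measuresD(1)[OF \<mu>] by auto
    show "\<phi> ` A \<subseteq> U"
      using \<phi>_U \<open>A \<subseteq> X\<close> by auto
  qed
  also have "\<dots> = emeasure (pullback_measure \<mu>) A"
    using emeasure_pullback_measure[OF \<mu> A] by simp
  finally show ?thesis .
qed

lemma rescaled_pullback_invariant:
  assumes \<mu>: "\<mu> \<in> invariant_measures X T" and "measure \<mu> U > 0"
  defines "\<nu> \<equiv> scale_measure (ennreal (1 / measure \<mu> U)) (pullback_measure \<mu>)"
  shows "\<nu> \<in> invariant_measures X T"
    and "\<And>A. A \<in> sets (restrict_space borel X) \<Longrightarrow> measure \<mu> (\<phi> ` A) = measure \<mu> U * measure \<nu> A"
proof -
  interpret prob_space \<mu>
    by (rule invariant_measuresD(3)[OF \<mu>])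
  have sets: "sets \<nu> = sets (restrict_space borel X)" and space: "space \<nu> = X"
    unfolding \<nu>_def using sets_pullback_measure[OF \<mu>] space_pullback_measure[OF \<mu>]
    by (simp_all add: space_scale_measure)
  have emeasure_\<nu>: "emeasure \<nu> A = ennreal (1 / measure \<mu> U) * ennreal (measure \<mu> (\<phi> ` A))"
    if "A \<in> sets (restrict_space borel X)" for A
    unfolding \<nu>_def using emeasure_pullback_measure[OF \<mu> that] by (simp add: emeasure_eq_measure)
  show "measure \<mu> (\<phi> ` A) = measure \<mu> U * measure \<nu> A" if "A \<in> sets (restrict_space borel X)" for A
    unfolding measure_def[of \<nu>] using emeasure_\<nu>[OF that] \<open>measure \<mu> U > 0\<close> by (simp add: enn2real_mult)
  have "X \<in> sets (restrict_space borel X)"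
    using closed by (simp add: sets_restrict_space_iff)
  then have "emeasure \<nu> (space \<nu>) = 1"
    using emeasure_\<nu> conjugacy \<open>measure \<mu> U > 0\<close> space
    by (simp add: homeomorphism_def ennreal_mult'[symmetric])
  moreover have "T \<in> measurable \<nu> \<nu>"
    using continuous_on_measurable_restrict_borel[of X T X] homeo measurable_cong_sets[OF sets sets]
    by (auto simp: homeomorphism_def)
  moreover have "emeasure \<nu> (T -` A \<inter> space \<nu>) = emeasure \<nu> A" if "A \<in> sets \<nu>" for A
    unfolding \<nu>_def using pullback_measure_invariant[OF \<mu>] that sets space by (simp add: \<nu>_def)
  ultimately show "\<nu> \<in> invariant_measures X T"
    unfolding invariant_measures_def using sets by (auto intro: prob_spaceI)
qed

lemma funpow_image_sets: "(\<phi> ^^ n) ` X \<in> sets (restrict_space borel X)"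
proof (induction n)
  case 0
  then show ?case
    using closed by (simp add: sets_restrict_space_iff)
next
  case (Suc n)
  then show ?case
    using image_sets[OF Suc] by (simp add: image_comp)
qed

lemma measure_funpow_image_le:
  assumes "0 \<le> q" and bound: "\<And>\<mu>. \<mu> \<in> invariant_measures X T \<Longrightarrow> measure \<mu> U \<le> q"
    and "\<mu> \<in> invariant_measures X T"
  shows "measure \<mu> ((\<phi> ^^ n) ` X) \<le> q ^ n"
  using \<open>\<mu> \<in> invariant_measures X T\<close>
proof (induction n arbitrary: \<mu>)
  case 0
  then show ?case
    using prob_space.prob_le_1[OF invariant_measuresD(3)] by simp
next
  case (Suc n)
  interpret prob_space \<mu>
    by (rule invariant_measuresD(3)[OF Suc.prems])
  have image_Suc: "(\<phi> ^^ Suc n) ` X = \<phi> ` ((\<phi> ^^ n) ` X)"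
    by (simp add: image_comp)
  show ?case
  proof (cases "measure \<mu> U = 0")
    case True
    have "(\<phi> ^^ n) ` X \<subseteq> X"
      using sets.sets_into_space[OF funpow_image_sets] by (simp add: space_restrict_space)
    then have "(\<phi> ^^ Suc n) ` X \<subseteq> U"
      unfolding image_Suc using \<phi>_U by blast
    then have "measure \<mu> ((\<phi> ^^ Suc n) ` X) \<le> measure \<mu> U"
      using U_sets invariant_measuresD(1)[OF Suc.prems] by (intro finite_measure_mono) auto
    moreover have "0 \<le> q ^ Suc n"
      using \<open>0 \<le> q\<close> by simp
    ultimately show ?thesis
      using True by linarith
  next
    case False
    then have "measure \<mu> U > 0"
      using measure_nonneg[of \<mu> U] by linarith
    then obtain \<nu> where "\<nu> \<in> invariant_measures X T"
      and "measure \<mu> ((\<phi> ^^ Suc n) ` X) = measure \<mu> U * measure \<nu> ((\<phi> ^^ n) ` X)"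
      using rescaled_pullback_invariant[OF Suc.prems] funpow_image_sets unfolding image_Suc by blast
    moreover have "measure \<mu> U * measure \<nu> ((\<phi> ^^ n) ` X) \<le> q * q ^ n"
      using bound Suc.IH \<open>\<nu> \<in> invariant_measures X T\<close> Suc.prems \<open>0 \<le> q\<close>
      by (intro mult_mono) auto
    ultimately show ?thesis
      by simp
  qed
qed

end

lemma tendsto_SUP_zero_dominated:
  fixes f :: "nat \<Rightarrow> 'b \<Rightarrow> real"
  assumes "M \<noteq> {}" "\<And>n \<mu>. \<mu> \<in> M \<Longrightarrow> 0 \<le> f n \<mu> \<and> f n \<mu> \<le> g n" "g \<longlonglongrightarrow> 0"
  shows "(\<lambda>n. SUP \<mu>\<in>M. f n \<mu>) \<longlonglongrightarrow> 0"
proof (rule real_tendsto_sandwich[OF _ _ tendsto_const \<open>g \<longlonglongrightarrow> 0\<close>])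
  obtain \<mu>\<^sub>0 where "\<mu>\<^sub>0 \<in> M"
    using assms(1) by blast
  have "bdd_above ((\<lambda>\<mu>. f n \<mu>) ` M)" for n
    using assms(2) by (intro bdd_aboveI[of _ "g n"]) auto
  then have "0 \<le> (SUP \<mu>\<in>M. f n \<mu>)" for n
    using assms(2)[OF \<open>\<mu>\<^sub>0 \<in> M\<close>] cSUP_upper[OF \<open>\<mu>\<^sub>0 \<in> M\<close>] by (meson order_trans)
  then show "\<forall>\<^sub>F n in sequentially. 0 \<le> (SUP \<mu>\<in>M. f n \<mu>)"
    by simp
  have "(SUP \<mu>\<in>M. f n \<mu>) \<le> g n" for n
    using assms(1,2) by (intro cSUP_least) auto
  then show "\<forall>\<^sub>F n in sequentially. (SUP \<mu>\<in>M. f n \<mu>) \<le> g n"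
    by simp
qed

theorem mainTheorem11:
  fixes X U :: "'a::metric_space set" and T \<phi> \<psi> :: "'a \<Rightarrow> 'a"
  assumes "minimal_cantor_system X T"
    and "clopen_in X U" and "U \<subset> X"
    and "homeomorphism X U \<phi> \<psi>"
    and "\<forall>x\<in>X. \<phi> (T x) = induced_map U T (\<phi> x)"
  shows "(\<lambda>n. SUP \<mu>\<in>invariant_measures X T. measure \<mu> ((\<phi> ^^ n) ` X)) \<longlonglongrightarrow> 0
    \<and> (\<forall>\<mu>\<in>invariant_measures X T. measure \<mu> (\<Inter>n. (\<phi> ^^ n) ` X) = 0)"
proof -
  obtain S where "cantor_set X" and hom: "homeomorphism X X T S"
    and dense: "\<forall>x\<in>X. X \<subseteq> closure ({(T ^^ n) x | n. True} \<union> {(S ^^ n) x | n. True})"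
    using assms(1) unfolding minimal_cantor_system_def by blast
  then have X: "compact X" "\<forall>x\<in>X. connected_component_set X x = {x}" "X \<noteq> {}"
    unfolding cantor_set_def by auto
  interpret self_induced_system X U T S \<phi> \<psi>
    using X assms(2-5) hom by unfold_locales (auto intro: compact_imp_closed)
  obtain q where "0 \<le> q" "q < 1" and q: "\<And>\<mu>. \<mu> \<in> invariant_measures X T \<Longrightarrow> measure \<mu> U \<le> q"
    using measure_proper_clopen_uniformly_bounded[OF X(1) hom dense assms(2,3)] by blast
  have bound: "measure \<mu> ((\<phi> ^^ n) ` X) \<le> q ^ n" if "\<mu> \<in> invariant_measures X T" for \<mu> n
    using measure_funpow_image_le[of q \<mu> n] \<open>0 \<le> q\<close> q that by blast
  have "invariant_measures X T \<noteq> {}"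
    using hom X by (intro invariant_measures_nonempty) (auto simp: homeomorphism_def)
  moreover have "(\<lambda>n. q ^ n) \<longlonglongrightarrow> 0"
    using \<open>0 \<le> q\<close> \<open>q < 1\<close> by (rule LIMSEQ_realpow_zero)
  ultimately have "(\<lambda>n. SUP \<mu>\<in>invariant_measures X T. measure \<mu> ((\<phi> ^^ n) ` X)) \<longlonglongrightarrow> 0"
    using bound by (intro tendsto_SUP_zero_dominated) auto
  moreover have "measure \<mu> (\<Inter>n. (\<phi> ^^ n) ` X) = 0" if "\<mu> \<in> invariant_measures X T" for \<mu>
  proof -
    interpret prob_space \<mu>
      by (rule invariant_measuresD(3)[OF that])
    have "measure \<mu> (\<Inter>n. (\<phi> ^^ n) ` X) \<le> measure \<mu> ((\<phi> ^^ n) ` X)" for n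
      using funpow_image_sets invariant_measuresD(1)[OF that] by (intro finite_measure_mono) auto
    then have "measure \<mu> (\<Inter>n. (\<phi> ^^ n) ` X) \<le> q ^ n" for n
      using bound[OF that, of n] by (rule order_trans)
    then show ?thesis
      using LIMSEQ_le_const[OF \<open>(\<lambda>n. q ^ n) \<longlonglongrightarrow> 0\<close>] measure_nonneg[of \<mu>] by (meson order_antisym)
  qed
  ultimately show ?thesis
    by blast
qed

end
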